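(* For every finite nonempty set $V$ of nails and every $k$ with $1 \le k \le |V|$, every word $H_k(V)$ produced by the following recursive construction solves the specification $\kappa_k(V)$ defined by $\kappa_k(V)(S) = \mathsf{fall} \iff |S| \ge k$ (i.e.\ $H_k(V)|_S = 0 \iff |S| \ge k$ for all $S \subseteq V$). Construction: if $|V| = 1$ (so $k=1$), $H_1(V)$ is the single generator. If $|V| \ge 2$, choose any split $V = L \sqcup R$ with $n_1 = |L| \ge 1$, $n_2 = |R| \ge 1$; for each feasible $j$, i.e.\ $\max(0, k-n_2) \le j \le \min(k, n_1)$, form \[ D_j = \begin{cases} H_k(R), & j = 0,\\ H_j(L) + H_{k-j}(R), & 0 < j < k,\\ H_k(L), & j = k,\end{cases} \] where the words $H_\cdot(L)$, $H_\cdot(R)$ are produced recursively by the same construction; then let $H_k(V)$ be the value of any commutator tree whose leaves are the words $D_j$, each feasible $j$ used exactly once (for instance the tree obtained by Huffman placement, repeatedly combining the two currently shortest subexpressions into a commutator).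
   Context: Words are elements of the free group $F(V)$ on a finite set $V$ of nails, written additively ($+$ group operation, $-$ inverse, $0$ identity); the commutator is $[a,b] = a + b - a - b$. A commutator tree is a finite rooted binary tree with leaves labelled by words, whose value is computed by taking the commutator of the values of the two children at each internal node. For $S \subseteq V$, $h|_S$ is the image of $h$ under the homomorphism killing the generators in $S$. A word $h$ solves a specification $f: 2^V \to \{\mathsf{hang},\mathsf{fall}\}$ if $h|_S = 0 \iff f(S)=\mathsf{fall}$ for all $S\subseteq V$. Solving $\kappa_k(V)$ with $V=\{1,\dots,n\}$ is the same as solving the $k$-out-of-$n$ picture-hanging puzzle: the word is nonzero, removing any $k$ nails makes it $0$, removing fewer leaves it nonzero. *)

theory Defs
  imports Main "HOL-Library.Multiset"
begin

text \<open>Elements of the free group F(V) are represented by (not necessarily reduced)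
words: lists of letters (x, True) = generator x, (x, False) = its inverse.
The group operation is concatenation, the inverse reverses and flips signs,
and a word represents the identity 0 iff it freely reduces to the empty word.\<close>

type_synonym 'a fword = "('a \<times> bool) list"

definition fg_neg :: "'a fword \<Rightarrow> 'a fword" where
  "fg_neg w = rev (map (\<lambda>(x, b). (x, \<not> b)) w)"

definition fg_comm :: "'a fword \<Rightarrow> 'a fword \<Rightarrow> 'a fword" where
  "fg_comm a b = a @ b @ fg_neg a @ fg_neg b"

inductive cancel1 :: "'a fword \<Rightarrow> 'a fword \<Rightarrow> bool" where
  "cancel1 (xs @ [(x, b), (x, \<not> b)] @ ys) (xs @ ys)"

definition fg_is_zero :: "'a fword \<Rightarrow> bool" where
  "fg_is_zero w \<longleftrightarrow> cancel1\<^sup>*\<^sup>* w []"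

text \<open>h|_S: image under the homomorphism killing the generators in S.\<close>
definition restrict_word :: "'a set \<Rightarrow> 'a fword \<Rightarrow> 'a fword" where
  "restrict_word S w = filter (\<lambda>(x, _). x \<notin> S) w"

datatype 'b ctree = Leaf 'b | Node "'b ctree" "'b ctree"

fun ct_leaves :: "'b ctree \<Rightarrow> 'b list" where
  "ct_leaves (Leaf x) = [x]"
| "ct_leaves (Node l r) = ct_leaves l @ ct_leaves r"

fun ct_value :: "('b \<Rightarrow> 'a fword) \<Rightarrow> 'b ctree \<Rightarrow> 'a fword" where
  "ct_value D (Leaf x) = D x"
| "ct_value D (Node l r) = fg_comm (ct_value D l) (ct_value D r)"

text \<open>hword V k w: w is a word that the recursive construction can produce as H_k(V)
(for some choice of splits, of recursive words, and of commutator trees).\<close>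
inductive hword :: "'a set \<Rightarrow> nat \<Rightarrow> 'a fword \<Rightarrow> bool" where
  base: "hword {v} 1 [(v, True)]"
| split: "\<lbrakk> finite L; finite R; L \<noteq> {}; R \<noteq> {}; L \<inter> R = {};
           1 \<le> k; k \<le> card L + card R;
           \<forall>j. k - card R \<le> j \<and> j \<le> min k (card L) \<longrightarrow>
              ((j = 0 \<and> hword R k (D j))
               \<or> (0 < j \<and> j < k \<and> (\<exists>a b. hword L j a \<and> hword R (k - j) b \<and> D j = a @ b))
               \<or> (j = k \<and> hword L k (D j)));
           mset (ct_leaves t) = mset [k - card R ..< min k (card L) + 1] \<rbrakk>
         \<Longrightarrow> hword (L \<union> R) k (ct_value D t)"

end

theory Submission
  imports Defs "HOL-Library.Function_Algebras"
begin

text \<open>By induction along the construction, every \<open>H\<^sub>k(V)\<close> satisfies a stronger invariant: besides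
  \<open>h|\<^sub>S = 0 \<longleftrightarrow> |S| \<ge> k\<close>, whenever removing one further nail \<open>g\<close> from a set \<open>S\<close> on which
  \<open>h\<close> hangs makes it fall, the Fox derivative \<open>\<partial>h/\<partial>g\<close>, mapped to the integral group ring by
  killing \<open>S \<union> {g}\<close>, is nonzero. For a product \<open>a + b\<close> of words on disjoint sets of nails
  both properties are immediate. In a commutator tree of the words \<open>D\<^sub>j\<close>, one nail makes at
  most one leaf fall, and at every commutator on the path from that leaf to the root one
  argument \<open>u\<close> is killed while the other \<open>v\<close> hangs, so the Fox derivative is multiplied by
  \<open>\<plusminus>(1 - v)\<close>. This factor kills no nonzero finitely supported element, as free groups are
  torsion-free. Finally, the nonzero Fox derivative at the first nail that makes the tree
  fall shows that the tree hangs as long as all its leaves do.\<close>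

definition inv_letter :: "'a \<times> bool \<Rightarrow> 'a \<times> bool" where
  "inv_letter p = (fst p, \<not> snd p)"

lemma inv_letter_inv_letter [simp]: "inv_letter (inv_letter p) = p"
  by (simp add: inv_letter_def)

lemma inv_letter_neq [simp]: "inv_letter p \<noteq> p" "p \<noteq> inv_letter p"
  by (cases p; simp add: inv_letter_def)+

lemma fst_inv_letter [simp]: "fst (inv_letter p) = fst p"
  by (simp add: inv_letter_def)

lemma fg_neg_eq: "fg_neg w = rev (map inv_letter w)"
  unfolding fg_neg_def inv_letter_def by (induction w) auto

lemma fg_neg_Nil [simp]: "fg_neg [] = []"
  by (simp add: fg_neg_eq)

lemma fg_neg_Cons [simp]: "fg_neg (x # w) = fg_neg w @ [inv_letter x]"
  by (simp add: fg_neg_eq)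

lemma fg_neg_append [simp]: "fg_neg (u @ v) = fg_neg v @ fg_neg u"
  by (simp add: fg_neg_eq)

lemma fg_neg_fg_neg [simp]: "fg_neg (fg_neg w) = w"
  by (simp add: fg_neg_eq rev_map comp_def)

lemma fst_set_fg_neg [simp]: "fst ` set (fg_neg w) = fst ` set w"
  by (simp add: fg_neg_eq image_image)

lemma fst_set_fg_comm [simp]: "fst ` set (fg_comm u v) = fst ` set u \<union> fst ` set v"
  by (auto simp: fg_comm_def image_Un)

lemma fg_comm_swap: "fg_comm v u = fg_neg (fg_comm u v)"
  by (simp add: fg_comm_def)

section \<open>Free reduction\<close>

fun reduce :: "'a fword \<Rightarrow> 'a fword" where
  "reduce [] = []"
| "reduce (x # xs) =
    (case reduce xs of [] \<Rightarrow> [x] | y # ys \<Rightarrow> if y = inv_letter x then ys else x # y # ys)"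

fun reduced :: "'a fword \<Rightarrow> bool" where
  "reduced [] = True"
| "reduced [x] = True"
| "reduced (x # y # ys) \<longleftrightarrow> y \<noteq> inv_letter x \<and> reduced (y # ys)"

lemma reduced_Cons: "reduced (x # ys) \<longleftrightarrow> reduced ys \<and> (ys \<noteq> [] \<longrightarrow> hd ys \<noteq> inv_letter x)"
  by (cases ys) auto

lemma reduced_append:
  "reduced (xs @ ys) \<longleftrightarrow>
     reduced xs \<and> reduced ys \<and> (xs \<noteq> [] \<longrightarrow> ys \<noteq> [] \<longrightarrow> hd ys \<noteq> inv_letter (last xs))"
  by (induction xs) (auto simp: reduced_Cons)

lemma reduced_reduce: "reduced (reduce w)"
  by (induction w) (auto simp: reduced_Cons split: list.splits)

lemma reduce_reduced: "reduced w \<Longrightarrow> reduce w = w"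
  by (induction w rule: reduced.induct) auto

lemma reduce_idem [simp]: "reduce (reduce w) = reduce w"
  by (simp add: reduce_reduced reduced_reduce)

lemma reduce_append_reduce: "reduce (u @ reduce v) = reduce (u @ v)"
  by (induction u) auto

lemma reduce_cancel_pair: "reduce (p # inv_letter p # w) = reduce w"
proof (cases "reduce w")
  case (Cons y ys)
  have "reduced (y # ys)"
    using reduced_reduce[of w] Cons by simp
  then show ?thesis
    using Cons by (cases ys) (auto simp: inv_letter_def)
qed simp

lemma cancel1_Cons_pair: "cancel1 (p # inv_letter p # w) w"
  using cancel1.intros[of "[]" "fst p" "snd p" w] by (simp add: inv_letter_def)

lemma cancel1_append_context: "cancel1 w w' \<Longrightarrow> cancel1 (u @ w @ v) (u @ w' @ v)"
proof (induction rule: cancel1.induct)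
  case (1 xs x b ys)
  show ?case
    using cancel1.intros[of "u @ xs" x b "ys @ v"] by simp
qed

lemma cancels_append_context: "cancel1\<^sup>*\<^sup>* w w' \<Longrightarrow> cancel1\<^sup>*\<^sup>* (u @ w @ v) (u @ w' @ v)"
  by (induction rule: rtranclp_induct) (auto intro: rtranclp.rtrancl_into_rtrancl cancel1_append_context)

lemma cancels_reduce_eq: "cancel1\<^sup>*\<^sup>* w w' \<Longrightarrow> reduce w = reduce w'"
proof (induction rule: rtranclp_induct)
  case (step w' w'')
  from step.hyps(2) have "reduce w' = reduce w''"
  proof cases
    case (1 xs x b ys)
    have "reduce (xs @ [(x, b), (x, \<not> b)] @ ys) = reduce (xs @ reduce ((x, b) # inv_letter (x, b) # ys))"
      by (simp only: reduce_append_reduce inv_letter_def fst_conv snd_conv append.simps)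
    also have "\<dots> = reduce (xs @ ys)"
      by (simp only: reduce_cancel_pair reduce_append_reduce)
    finally show ?thesis
      using 1 by simp
  qed
  with step.IH show ?case by simp
qed simp

lemma cancels_to_reduce: "cancel1\<^sup>*\<^sup>* w (reduce w)"
proof (induction w)
  case (Cons x w)
  have "cancel1\<^sup>*\<^sup>* (x # w) (x # reduce w)"
    using cancels_append_context[OF Cons, of "[x]" "[]"] by simp
  then show ?case
    using cancel1_Cons_pair[of x]
    by (auto split: list.splits intro: rtranclp.rtrancl_into_rtrancl)
qed simp

lemma fg_is_zero_iff_reduce: "fg_is_zero w \<longleftrightarrow> reduce w = []"
  unfolding fg_is_zero_def
  by (metis cancels_reduce_eq cancels_to_reduce reduce.simps(1))

lemma reduce_append: "reduce (u @ v) = reduce (reduce u @ reduce v)"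
  using cancels_append_context[OF cancels_to_reduce[of u], of "[]" v]
    cancels_append_context[OF cancels_to_reduce[of v], of "reduce u" "[]"]
  by (auto intro: cancels_reduce_eq rtranclp_trans)

lemma reduce_reduce_append: "reduce (reduce u @ v) = reduce (u @ v)"
  by (metis reduce_append reduce_idem)

lemma reduce_append_Nil_middle: "reduce a = [] \<Longrightarrow> reduce (u @ a @ v) = reduce (u @ v)"
  by (metis append.left_neutral reduce_append reduce_append_reduce)

lemma cancels_fg_neg: "cancel1\<^sup>*\<^sup>* w w' \<Longrightarrow> cancel1\<^sup>*\<^sup>* (fg_neg w) (fg_neg w')"
proof (induction rule: rtranclp_induct)
  case (step w' w'')
  from step.hyps(2) have "cancel1 (fg_neg w') (fg_neg w'')"
  proof cases
    case (1 xs x b ys)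
    then show ?thesis
      using cancel1.intros[of "fg_neg ys" x b "fg_neg xs"] by (simp add: inv_letter_def)
  qed
  with step.IH show ?case by simp
qed simp

lemma reduce_fg_neg_reduce: "reduce (fg_neg (reduce w)) = reduce (fg_neg w)"
  using cancels_reduce_eq[OF cancels_fg_neg[OF cancels_to_reduce[of w]]] by simp

lemma reduce_fg_neg_eq_Nil_iff [simp]: "reduce (fg_neg w) = [] \<longleftrightarrow> reduce w = []"
  by (metis fg_neg_Nil fg_neg_fg_neg reduce.simps(1) reduce_fg_neg_reduce)

lemma reduce_append_fg_neg [simp]: "reduce (w @ fg_neg w) = []"
proof (induction w)
  case (Cons x w)
  then show ?case
    using reduce_append_Nil_middle[OF Cons, of "[x]" "[inv_letter x]"]
    by (simp add: reduce_cancel_pair)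
qed simp

lemma reduce_fg_neg_append [simp]: "reduce (fg_neg w @ w) = []"
  using reduce_append_fg_neg[of "fg_neg w"] by simp

lemma reduce_fg_comm_eq_Nil:
  assumes "reduce u = [] \<or> reduce v = []"
  shows "reduce (fg_comm u v) = []"
proof -
  have "reduce (fg_comm u v) = []" if "reduce u = []" for u v :: "'a fword"
    using that reduce_append_Nil_middle[of u "[]"] reduce_append_Nil_middle[of "fg_neg u" v]
    by (simp add: fg_comm_def)
  then show ?thesis
    using assms fg_comm_swap[of v u] by (metis reduce_fg_neg_eq_Nil_iff)
qed

section \<open>Killing generators\<close>

lemma restrict_word_Nil [simp]: "restrict_word X [] = []"
  by (simp add: restrict_word_def)

lemma restrict_word_append [simp]:
  "restrict_word X (u @ v) = restrict_word X u @ restrict_word X v"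
  by (simp add: restrict_word_def)

lemma restrict_word_Cons:
  "restrict_word X (x # w) = (if fst x \<in> X then restrict_word X w else x # restrict_word X w)"
  by (cases x) (simp add: restrict_word_def)

lemma restrict_word_fg_neg: "restrict_word X (fg_neg w) = fg_neg (restrict_word X w)"
  by (induction w) (auto simp: restrict_word_Cons)

lemma restrict_word_fg_comm:
  "restrict_word X (fg_comm u v) = fg_comm (restrict_word X u) (restrict_word X v)"
  by (simp add: fg_comm_def restrict_word_fg_neg)

lemma restrict_word_restrict_word:
  "restrict_word X (restrict_word Y w) = restrict_word (X \<union> Y) w"
  by (induction w) (auto simp: restrict_word_Cons)

lemma restrict_word_eq_Nil: "fst ` set w \<subseteq> X \<Longrightarrow> restrict_word X w = []"
  by (induction w) (auto simp: restrict_word_Cons)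

lemma cancels_restrict_word:
  "cancel1\<^sup>*\<^sup>* w w' \<Longrightarrow> cancel1\<^sup>*\<^sup>* (restrict_word X w) (restrict_word X w')"
proof (induction rule: rtranclp_induct)
  case (step w' w'')
  from step.hyps(2) have "cancel1\<^sup>*\<^sup>* (restrict_word X w') (restrict_word X w'')"
  proof cases
    case (1 xs x b ys)
    then show ?thesis
      using cancel1.intros[of "restrict_word X xs" x b "restrict_word X ys"]
      by (auto simp: restrict_word_Cons)
  qed
  with step.IH show ?case by simp
qed simp

definition kill :: "'a set \<Rightarrow> 'a fword \<Rightarrow> 'a fword" where
  "kill X w = reduce (restrict_word X w)"

lemma kill_Nil [simp]: "kill X [] = []"
  by (simp add: kill_def)

lemma kill_reduce: "kill X (reduce w) = kill X w"
  unfolding kill_def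
  using cancels_reduce_eq[OF cancels_restrict_word[OF cancels_to_reduce[of w]]] by simp

lemma kill_append: "kill X (u @ v) = reduce (kill X u @ kill X v)"
  by (simp add: kill_def reduce_append[of "restrict_word X u"])

lemma kill_fg_neg: "kill X (fg_neg w) = reduce (fg_neg (kill X w))"
  by (simp add: kill_def restrict_word_fg_neg reduce_fg_neg_reduce)

lemma kill_fg_comm_eq_Nil: "kill X u = [] \<or> kill X v = [] \<Longrightarrow> kill X (fg_comm u v) = []"
  by (simp add: kill_def restrict_word_fg_comm reduce_fg_comm_eq_Nil)

lemma kill_eq_Nil_mono:
  assumes "kill P w = []" "P \<subseteq> P'"
  shows "kill P' w = []"
proof -
  have "kill P' w = kill P' (restrict_word P w)"
    using assms(2) by (simp add: kill_def restrict_word_restrict_word Un_absorb2)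
  also have "\<dots> = kill P' (kill P w)"
    by (simp only: kill_def[of P] kill_reduce)
  finally show ?thesis
    using assms(1) by simp
qed

section \<open>Free groups are torsion-free\<close>

definition word_pow :: "'a fword \<Rightarrow> nat \<Rightarrow> 'a fword" where
  "word_pow d n = concat (replicate n d)"

lemma word_pow_0 [simp]: "word_pow d 0 = []"
  by (simp add: word_pow_def)

lemma word_pow_Suc: "word_pow d (Suc n) = d @ word_pow d n"
  by (simp add: word_pow_def)

lemma word_pow_add: "word_pow d (m + n) = word_pow d m @ word_pow d n"
  by (simp add: word_pow_def replicate_add)

lemma word_pow_ends:
  assumes "s \<noteq> []" "n \<ge> 1"
  shows "word_pow s n \<noteq> []" "hd (word_pow s n) = hd s" "last (word_pow s n) = last s"
proof -
  obtain m where "n = Suc m" using assms(2) by (cases n) auto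
  then show "word_pow s n \<noteq> []" "hd (word_pow s n) = hd s" "last (word_pow s n) = last s"
    using assms(1) by (induction m arbitrary: n) (auto simp: word_pow_Suc)
qed

lemma reduced_word_pow:
  assumes "reduced (s @ s)" "s \<noteq> []" "n \<ge> 1"
  shows "reduced (word_pow s n)"
proof -
  obtain m where "n = Suc m" using assms(3) by (cases n) auto
  then show ?thesis
  proof (induction m arbitrary: n)
    case 0
    then show ?case using assms(1) by (simp add: word_pow_Suc reduced_append)
  next
    case (Suc m)
    then show ?case
      using assms word_pow_ends[of s "Suc m"] by (simp add: word_pow_Suc reduced_append)
  qed
qed

lemma reduced_conj_cyclically_reduced:
  "reduced d \<Longrightarrow> d \<noteq> [] \<Longrightarrow> \<exists>c s. d = c @ s @ fg_neg c \<and> s \<noteq> [] \<and> reduced (s @ s)"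
proof (induction "length d" arbitrary: d rule: less_induct)
  case less
  show ?case
  proof (cases "length d = 1 \<or> hd d \<noteq> inv_letter (last d)")
    case True
    have "reduced (d @ d)"
    proof (cases "length d = 1")
      case True
      then show ?thesis by (auto simp: length_Suc_conv)
    next
      case False
      then show ?thesis
        using \<open>length d = 1 \<or> hd d \<noteq> inv_letter (last d)\<close> less.prems(1)
        by (simp add: reduced_append)
    qed
    then show ?thesis
      using less.prems(2) by (intro exI[of _ "[]"] exI[of _ d]) auto
  next
    case False
    with less.prems obtain x m where d: "d = x # m @ [inv_letter x]"
      by (cases d rule: rev_cases) (auto simp: neq_Nil_conv)
    with less.prems(1) have "m \<noteq> []"
      by auto
    moreover from less.prems(1) d have "reduced m"
      by (simp add: reduced_Cons reduced_append)
    ultimately obtain c s where "m = c @ s @ fg_neg c" "s \<noteq> []" "reduced (s @ s)"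
      using less.hyps[of m] d by auto
    then show ?thesis
      using d by (intro exI[of _ "x # c"] exI[of _ s]) auto
  qed
qed

lemma reduce_word_pow_conj:
  "n \<ge> 1 \<Longrightarrow> reduce (word_pow (c @ s @ fg_neg c) n) = reduce (c @ word_pow s n @ fg_neg c)"
proof (induction n rule: dec_induct)
  case (step n)
  have "reduce (word_pow (c @ s @ fg_neg c) (Suc n))
      = reduce ((c @ s @ fg_neg c) @ reduce (word_pow (c @ s @ fg_neg c) n))"
    by (simp only: word_pow_Suc reduce_append_reduce)
  also have "\<dots> = reduce ((c @ s) @ (fg_neg c @ c) @ word_pow s n @ fg_neg c)"
    by (simp only: step.IH reduce_append_reduce) simp
  also have "\<dots> = reduce ((c @ s) @ word_pow s n @ fg_neg c)"
    by (rule reduce_append_Nil_middle[OF reduce_fg_neg_append])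
  finally show ?case
    by (simp add: word_pow_Suc)
qed (simp add: word_pow_Suc)

lemma reduce_word_pow_neq_Nil:
  assumes "reduced d" "d \<noteq> []" "n \<ge> 1"
  shows "reduce (word_pow d n) \<noteq> []"
proof -
  obtain c s where d: "d = c @ s @ fg_neg c" and s: "s \<noteq> []" "reduced (s @ s)"
    using reduced_conj_cyclically_reduced[OF assms(1,2)] by blast
  have "reduced (c @ s @ fg_neg c)"
    using assms(1) d by simp
  then have "reduced (c @ word_pow s n @ fg_neg c)"
    using reduced_word_pow[OF s(2,1) assms(3)] word_pow_ends[OF s(1) assms(3)] s(1)
    by (simp add: reduced_append)
  then show ?thesis
    using reduce_word_pow_conj[OF assms(3), of c s] d word_pow_ends(1)[OF s(1) assms(3)]
    by (simp add: reduce_reduced)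
qed

lemma reduce_word_pow_reduce: "reduce (word_pow (reduce c) n) = reduce (word_pow c n)"
proof (induction n)
  case (Suc n)
  then show ?case
    by (metis word_pow_Suc reduce_append_reduce reduce_reduce_append)
qed simp

lemma reduce_eq_Nil_if_word_pow:
  assumes "reduce (word_pow c n) = []" "n \<ge> 1"
  shows "reduce c = []"
  using reduce_word_pow_neq_Nil[OF reduced_reduce _ assms(2), of c] assms(1)
  by (auto simp: reduce_word_pow_reduce)

section \<open>Fox derivatives\<close>

text \<open>Elements of the integral group ring of the free group are modelled as functions
  \<^typ>\<open>'a fword \<Rightarrow> int\<close> that only depend on the reduced form of their argument;
  \<open>translate c\<close> is left multiplication by \<open>c\<close>.\<close>

definition reduce_invariant :: "('a fword \<Rightarrow> int) \<Rightarrow> bool" where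
  "reduce_invariant f \<longleftrightarrow> (\<forall>r. f (reduce r) = f r)"

definition translate :: "'a fword \<Rightarrow> ('a fword \<Rightarrow> int) \<Rightarrow> 'a fword \<Rightarrow> int" where
  "translate c f r = f (reduce (fg_neg c @ r))"

lemma reduce_invariant_translate: "reduce_invariant (translate c f)"
  by (simp add: reduce_invariant_def translate_def reduce_append_reduce)

lemma translate_Nil: "reduce_invariant f \<Longrightarrow> translate [] f = f"
  by (simp add: reduce_invariant_def translate_def fun_eq_iff)

lemma translate_reduce: "translate (reduce c) f = translate c f"
  by (rule ext) (metis translate_def reduce_fg_neg_reduce reduce_reduce_append)

lemma translate_translate: "translate c (translate d f) = translate (c @ d) f"
  by (simp add: translate_def fun_eq_iff reduce_append_reduce)

lemma translate_0 [simp]: "translate c 0 = 0"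
  by (simp add: translate_def fun_eq_iff)

lemma translate_add: "translate c (f + h) = translate c f + translate c h"
  by (simp add: translate_def fun_eq_iff)

lemma translate_uminus: "translate c (- f) = - translate c f"
  by (simp add: translate_def fun_eq_iff)

text \<open>The Fox derivative \<open>\<partial>w/\<partial>g\<close>, mapped to the group ring by killing the generators in \<open>X\<close>.
  It is only used for \<open>g \<in> X\<close>, where the term \<open>-g\<^sup>-\<^sup>1\<close> of \<open>\<partial>g\<^sup>-\<^sup>1/\<partial>g\<close> becomes \<open>-1\<close>.\<close>

definition fox_letter :: "'a \<Rightarrow> 'a \<times> bool \<Rightarrow> 'a fword \<Rightarrow> int" where
  "fox_letter g x r = (if fst x = g \<and> reduce r = [] then (if snd x then 1 else -1) else 0)"

primrec fox :: "'a set \<Rightarrow> 'a \<Rightarrow> 'a fword \<Rightarrow> 'a fword \<Rightarrow> int" where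
  "fox X g [] = 0"
| "fox X g (x # w) = fox_letter g x + translate (kill X [x]) (fox X g w)"

lemma fox_letter_eq_0: "fst x \<noteq> g \<Longrightarrow> fox_letter g x = 0"
  by (simp add: fun_eq_iff fox_letter_def)

lemma reduce_invariant_fox: "reduce_invariant (fox X g w)"
proof (cases w)
  case (Cons x w')
  then show ?thesis
    using reduce_invariant_translate[of "kill X [x]" "fox X g w'"]
    by (simp add: reduce_invariant_def fox_letter_def)
qed (simp add: reduce_invariant_def)

lemma fox_append: "fox X g (u @ v) = fox X g u + translate (kill X u) (fox X g v)"
proof (induction u)
  case Nil
  show ?case
    by (simp add: translate_Nil reduce_invariant_fox)
next
  case (Cons x u)
  have "translate (kill X [x]) (translate (kill X u) (fox X g v)) = translate (kill X (x # u)) (fox X g v)"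
    using kill_append[of X "[x]" u] by (simp add: translate_translate translate_reduce)
  then show ?case
    by (simp only: append_Cons fox.simps Cons.IH translate_add add.assoc)
qed

lemma fox_append_kill_Nil: "kill X u = [] \<Longrightarrow> fox X g (u @ v) = fox X g u + fox X g v"
  by (simp add: fox_append translate_Nil reduce_invariant_fox)

lemma fox_cancel_pair: "g \<in> X \<Longrightarrow> fox X g (p # inv_letter p # w) = fox X g w"
proof (cases "fst p = g")
  case True
  moreover assume "g \<in> X"
  ultimately have "kill X [p] = []" "kill X [inv_letter p] = []"
    by (simp_all add: kill_def restrict_word_Cons)
  with True show ?thesis
    using reduce_invariant_fox[of X g w]
    by (auto simp: fun_eq_iff translate_def reduce_invariant_def fox_letter_def inv_letter_def)
next
  case False
  have "reduce (kill X [p] @ kill X [inv_letter p]) = []"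
    using kill_append[of X "[p]" "[inv_letter p]"] by (simp add: kill_def restrict_word_Cons reduce_cancel_pair)
  then have "translate (kill X [p]) (translate (kill X [inv_letter p]) (fox X g w)) = fox X g w"
    by (metis translate_translate translate_reduce translate_Nil reduce_invariant_fox)
  with False show ?thesis
    by (simp add: fox_letter_eq_0)
qed

lemma fox_reduce: "g \<in> X \<Longrightarrow> fox X g (reduce w) = fox X g w"
proof -
  assume "g \<in> X"
  have "fox X g w = fox X g w'" if "cancel1\<^sup>*\<^sup>* w w'" for w w'
    using that
  proof (induction rule: rtranclp_induct)
    case (step w' w'')
    from step.hyps(2) have "fox X g w' = fox X g w''"
    proof cases
      case (1 xs x b ys)
      then show ?thesis
        using fox_cancel_pair[OF \<open>g \<in> X\<close>, of "(x, b)" ys] by (simp add: fox_append inv_letter_def)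
    qed
    with step.IH show ?case by simp
  qed simp
  then show ?thesis
    using cancels_to_reduce by metis
qed

lemma fox_eq_0_if_reduce_Nil: "g \<in> X \<Longrightarrow> reduce w = [] \<Longrightarrow> fox X g w = 0"
  using fox_reduce[of g X w] by simp

lemma fox_eq_0_if_notin: "g \<notin> fst ` set w \<Longrightarrow> fox X g w = 0"
  by (induction w) (auto simp: fox_letter_eq_0)

lemma fox_restrict_word: "P \<subseteq> X \<Longrightarrow> g \<notin> P \<Longrightarrow> fox X g (restrict_word P w) = fox X g w"
proof (induction w)
  case (Cons x w)
  show ?case
  proof (cases "fst x \<in> P")
    case True
    then have "kill X [x] = []" "fst x \<noteq> g"
      using Cons.prems by (auto simp: kill_def restrict_word_Cons)
    then show ?thesis
      using True Cons by (simp add: restrict_word_Cons fun_eq_iff fox_letter_def translate_Nil reduce_invariant_fox)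
  next
    case False
    then show ?thesis
      using Cons by (simp add: restrict_word_Cons)
  qed
qed simp

lemma fox_fg_neg:
  assumes "g \<in> X" "kill X w = []"
  shows "fox X g (fg_neg w) = - fox X g w"
proof -
  have "fox X g w + fox X g (fg_neg w) = 0"
    using fox_eq_0_if_reduce_Nil[OF assms(1), of "w @ fg_neg w"] fox_append_kill_Nil[OF assms(2)]
    by simp
  then show ?thesis
    by (metis add.commute eq_neg_iff_add_eq_0)
qed

lemma fox_fg_comm:
  assumes "g \<in> X" "kill X u = []"
  shows "fox X g (fg_comm u v) = fox X g u - translate (kill X v) (fox X g u)"
proof -
  have "kill X (fg_neg u) = []"
    using assms(2) by (simp add: kill_fg_neg)
  then have "fox X g (v @ fg_neg u @ fg_neg v)
      = fox X g v + translate (kill X v) (- fox X g u + fox X g (fg_neg v))"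
    by (simp only: fox_append[of X g v] fox_append_kill_Nil fox_fg_neg[OF assms])
  then have "fox X g (fg_comm u v) = fox X g u + (fox X g v
      + translate (kill X v) (- fox X g u + fox X g (fg_neg v)))"
    using assms(2) by (simp add: fg_comm_def fox_append_kill_Nil)
  moreover have "fox X g v = - translate (kill X v) (fox X g (fg_neg v))"
    using fox_eq_0_if_reduce_Nil[OF assms(1), of "v @ fg_neg v"]
    by (simp add: fox_append eq_neg_iff_add_eq_0)
  ultimately show ?thesis
    by (simp only: translate_add translate_uminus) (simp add: algebra_simps)
qed

lemma fox_fg_comm_right:
  assumes "g \<in> X" "kill X u = []"
  shows "fox X g (fg_comm v u) = translate (kill X v) (fox X g u) - fox X g u"
proof -
  have "kill X (fg_comm u v) = []"
    using assms(2) kill_fg_comm_eq_Nil by blast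
  then have "fox X g (fg_comm v u) = - fox X g (fg_comm u v)"
    using assms(1) by (simp add: fg_comm_swap[of v u] fox_fg_neg)
  then show ?thesis
    by (simp add: fox_fg_comm[OF assms])
qed

definition supp :: "('a fword \<Rightarrow> int) \<Rightarrow> 'a fword set" where
  "supp f = {r. reduced r \<and> f r \<noteq> 0}"

lemma supp_translate: "supp (translate c f) \<subseteq> (\<lambda>r. reduce (c @ r)) ` supp f"
proof
  fix r
  assume "r \<in> supp (translate c f)"
  then have r: "reduced r" "f (reduce (fg_neg c @ r)) \<noteq> 0"
    by (auto simp: supp_def translate_def)
  have "r = reduce (c @ reduce (fg_neg c @ r))"
    using r(1) reduce_append_Nil_middle[of "c @ fg_neg c" "[]" r]
    by (simp add: reduce_append_reduce reduce_reduced)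
  moreover have "reduce (fg_neg c @ r) \<in> supp f"
    using r by (simp add: supp_def reduced_reduce)
  ultimately show "r \<in> (\<lambda>r. reduce (c @ r)) ` supp f"
    by blast
qed

lemma finite_supp_fox: "finite (supp (fox X g w))"
proof (induction w)
  case (Cons x w)
  have "supp (fox X g (x # w)) \<subseteq> insert [] (supp (translate (kill X [x]) (fox X g w)))"
    by (auto simp: supp_def fox_letter_def reduce_reduced)
  also have "\<dots> \<subseteq> insert [] ((\<lambda>r. reduce (kill X [x] @ r)) ` supp (fox X g w))"
    using supp_translate by blast
  finally show ?case
    using Cons finite_subset by blast
qed (simp add: supp_def)

lemma translate_word_pow_fixed:
  assumes "reduce_invariant f" "translate c f = f"
  shows "translate (word_pow c n) f = f"
  by (induction n) (simp_all add: word_pow_Suc translate_Nil assms flip: translate_translate)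

text \<open>A nonzero finitely supported element fixed by a translation forces the translating
  element to have finite order, so it is trivial as free groups are torsion-free.\<close>

lemma translate_fixed_imp_reduce_Nil:
  assumes inv: "reduce_invariant f" and fin: "finite (supp f)" and "f \<noteq> 0"
    and fixed: "translate c f = f"
  shows "reduce c = []"
proof -
  obtain r0 where "f r0 \<noteq> 0"
    using \<open>f \<noteq> 0\<close> by (auto simp: fun_eq_iff)
  then obtain r1 where r1: "reduced r1" "f r1 \<noteq> 0"
    using inv reduced_reduce by (metis reduce_invariant_def)
  define s where "s n = reduce (fg_neg (word_pow c n) @ r1)" for n
  have "s n \<in> supp f" for n
  proof -
    have "f (s n) = f r1"
      using fun_cong[OF translate_word_pow_fixed[OF inv fixed, of n], of r1] r1(1)
      by (simp only: s_def translate_def reduce_reduced)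
    moreover have "reduced (s n)"
      by (simp only: s_def reduced_reduce)
    ultimately show ?thesis
      using r1 by (simp add: supp_def)
  qed
  then have "range s \<subseteq> supp f"
    by blast
  then have "finite (range s)"
    using fin by (rule finite_subset)
  then have "\<not> inj s"
    using finite_imageD infinite_UNIV_nat by blast
  then obtain i j where "s i = s j" "i < j"
    by (metis injI linorder_neqE_nat)
  define e where "e = j - i"
  have e: "j = i + e" "e \<ge> 1"
    using \<open>i < j\<close> by (simp_all add: e_def)
  have "s j = reduce (fg_neg (word_pow c e) @ s i)"
    by (simp add: s_def e(1) word_pow_add reduce_append_reduce)
  then have "reduce (fg_neg (word_pow c e) @ s i @ fg_neg (s i)) = reduce (s i @ fg_neg (s i))"
    using \<open>s i = s j\<close> by (metis append_assoc reduce_reduce_append)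
  then have "reduce (word_pow c e) = []"
    using reduce_append_Nil_middle[of "s i @ fg_neg (s i)" "fg_neg (word_pow c e)" "[]"]
    by (metis append_Nil2 reduce_append_fg_neg reduce_fg_neg_eq_Nil_iff)
  then show ?thesis
    using reduce_eq_Nil_if_word_pow e(2) by blast
qed

lemma fox_fg_comm_neq_0:
  assumes "g \<in> X" "kill X u = []" "kill X v \<noteq> []" "fox X g u \<noteq> 0"
  shows "fox X g (fg_comm u v) \<noteq> 0" "fox X g (fg_comm v u) \<noteq> 0"
proof -
  have "translate (kill X v) (fox X g u) \<noteq> fox X g u"
    using translate_fixed_imp_reduce_Nil[OF reduce_invariant_fox finite_supp_fox assms(4)] assms(3)
    by (metis kill_def reduce_idem)
  then show "fox X g (fg_comm u v) \<noteq> 0" "fox X g (fg_comm v u) \<noteq> 0"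
    by (simp_all add: fox_fg_comm fox_fg_comm_right assms(1,2))
qed

section \<open>Commutator trees\<close>

text \<open>Solving \<open>F\<close> with nails in \<open>V\<close>, strengthened so that a nail whose removal makes \<open>w\<close>
  fall is also detected by the Fox derivative in that nail. Unlike solving alone, this
  survives taking commutators.\<close>

definition strongly_solves :: "'a set \<Rightarrow> ('a set \<Rightarrow> bool) \<Rightarrow> 'a fword \<Rightarrow> bool" where
  "strongly_solves V F w \<longleftrightarrow> fst ` set w \<subseteq> V \<and> (\<forall>P. kill P w = [] \<longleftrightarrow> F P) \<and>
     (\<forall>P g. \<not> F P \<longrightarrow> F (insert g P) \<longrightarrow> fox (insert g P) g w \<noteq> 0)"

lemma strongly_solves_Un:
  assumes "strongly_solves V F w"
  shows "F (P \<union> V)"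
proof -
  have "restrict_word (P \<union> V) w = []"
    using assms by (intro restrict_word_eq_Nil) (auto simp: strongly_solves_def)
  then show ?thesis
    using assms by (auto simp: strongly_solves_def kill_def)
qed

lemma kill_neq_Nil_if_fox_neq_0:
  assumes "fox (insert g P) g w \<noteq> 0" "g \<notin> P"
  shows "kill P w \<noteq> []"
proof
  assume "kill P w = []"
  then have "fox (insert g P) g (restrict_word P w) = 0"
    by (simp add: kill_def fox_eq_0_if_reduce_Nil)
  with assms show False
    by (simp add: fox_restrict_word subset_insertI)
qed

text \<open>Growing \<open>P\<close> one nail at a time until \<open>Q\<close> holds reaches a nail whose Fox derivative
  is nonzero, so \<open>w\<close> still hangs just before it, and hence at \<open>P\<close>.\<close>

lemma kill_neq_Nil_if_fox_detects:
  assumes "finite U" "\<not> Q P" "Q (P \<union> U)"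
    and detects: "\<And>P g. \<not> Q P \<Longrightarrow> Q (insert g P) \<Longrightarrow> fox (insert g P) g w \<noteq> 0"
  shows "kill P w \<noteq> []"
  using assms(1,3)
proof (induction U rule: finite_induct)
  case empty
  then show ?case
    using assms(2) by simp
next
  case (insert x U)
  show ?case
  proof (cases "Q (P \<union> U)")
    case True
    then show ?thesis
      by (rule insert.IH)
  next
    case False
    have "Q (insert x (P \<union> U))"
      using insert.prems by simp
    then have "fox (insert x (P \<union> U)) x w \<noteq> 0" "x \<notin> P \<union> U"
      using detects[OF False] False by (auto simp: insert_absorb)
    then have "kill (P \<union> U) w \<noteq> []"
      by (rule kill_neq_Nil_if_fox_neq_0)
    then show ?thesis
      using kill_eq_Nil_mono[of P w "P \<union> U"] by blast
  qed
qed

lemma ct_leaves_neq_Nil: "ct_leaves t \<noteq> []"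
  by (induction t) auto

lemma fst_set_ct_value: "fst ` set (ct_value D t) \<subseteq> (\<Union>j\<in>set (ct_leaves t). fst ` set (D j))"
  by (induction t) auto

lemma kill_ct_value_eq_Nil:
  "j \<in> set (ct_leaves t) \<Longrightarrow> kill P (D j) = [] \<Longrightarrow> kill P (ct_value D t) = []"
  by (induction t) (auto intro: kill_fg_comm_eq_Nil)

lemma kill_ct_value_neq_Nil:
  assumes "finite V"
    and leaves: "\<forall>j\<in>set (ct_leaves t). strongly_solves V (F j) (D j)"
    and "\<forall>j\<in>set (ct_leaves t). \<not> F j P"
    and detects: "\<And>P g. \<forall>j\<in>set (ct_leaves t). \<not> F j P \<Longrightarrow> \<exists>j\<in>set (ct_leaves t). F j (insert g P) \<Longrightarrow>
      fox (insert g P) g (ct_value D t) \<noteq> 0"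
  shows "kill P (ct_value D t) \<noteq> []"
proof (rule kill_neq_Nil_if_fox_detects[OF \<open>finite V\<close>])
  obtain j where "j \<in> set (ct_leaves t)"
    using ct_leaves_neq_Nil by (metis list.set_sel(1))
  then show "\<exists>j\<in>set (ct_leaves t). F j (P \<union> V)"
    using leaves strongly_solves_Un by blast
qed (use assms(3) detects in auto)

lemma fox_ct_value_neq_0:
  assumes "finite V"
    and leaves: "\<And>j. j \<in> J \<Longrightarrow> strongly_solves V (F j) (D j)"
    and one_at_a_time: "\<And>i j P g. i \<in> J \<Longrightarrow> j \<in> J \<Longrightarrow> \<not> F i P \<Longrightarrow> F i (insert g P) \<Longrightarrow>
      \<not> F j P \<Longrightarrow> F j (insert g P) \<Longrightarrow> i = j"
  shows "set (ct_leaves t) \<subseteq> J \<Longrightarrow> distinct (ct_leaves t) \<Longrightarrow>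
    \<forall>j\<in>set (ct_leaves t). \<not> F j P \<Longrightarrow> \<exists>j\<in>set (ct_leaves t). F j (insert g P) \<Longrightarrow>
    fox (insert g P) g (ct_value D t) \<noteq> 0"
proof (induction t arbitrary: P g)
  case (Leaf j)
  then have "strongly_solves V (F j) (D j)" "\<not> F j P" "F j (insert g P)"
    using leaves by auto
  then show ?case
    unfolding strongly_solves_def ct_value.simps by blast
next
  case (Node t1 t2)
  let ?l1 = "set (ct_leaves t1)" and ?l2 = "set (ct_leaves t2)" and ?X = "insert g P"
  have sub: "?l1 \<subseteq> J" "?l2 \<subseteq> J" and dist: "distinct (ct_leaves t1)" "distinct (ct_leaves t2)"
    and disj: "?l1 \<inter> ?l2 = {}" and hang: "\<forall>j\<in>?l1. \<not> F j P" "\<forall>j\<in>?l2. \<not> F j P"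
    using Node.prems(1-3) by auto
  obtain j0 where j0: "j0 \<in> ?l1 \<union> ?l2" "F j0 ?X"
    using Node.prems(4) by auto
  have only_j0: "\<not> F j ?X" if "j \<in> ?l1 \<union> ?l2" "j \<noteq> j0" for j
  proof
    assume "F j ?X"
    moreover have "j \<in> J" "j0 \<in> J" "\<not> F j P" "\<not> F j0 P"
      using that(1) j0(1) sub hang by auto
    ultimately show False
      using one_at_a_time[of j j0 P g] j0(2) that(2) by simp
  qed
  have "kill ?X (D j0) = []"
    using j0 sub leaves[of j0] by (auto simp: strongly_solves_def)
  note IH = Node.IH(1)[OF sub(1) dist(1)] Node.IH(2)[OF sub(2) dist(2)]
  have dies: "kill ?X (ct_value D s) = []" if "j0 \<in> set (ct_leaves s)" for s
    using that \<open>kill ?X (D j0) = []\<close> by (rule kill_ct_value_eq_Nil)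
  have hangs1: "kill ?X (ct_value D t1) \<noteq> []" if "j0 \<notin> ?l1"
    by (rule kill_ct_value_neq_Nil[OF \<open>finite V\<close> _ _ IH(1)]) (use sub(1) leaves only_j0 that in auto)
  have hangs2: "kill ?X (ct_value D t2) \<noteq> []" if "j0 \<notin> ?l2"
    by (rule kill_ct_value_neq_Nil[OF \<open>finite V\<close> _ _ IH(2)]) (use sub(2) leaves only_j0 that in auto)
  have fox1: "fox ?X g (ct_value D t1) \<noteq> 0" if "j0 \<in> ?l1"
    using IH(1)[OF hang(1)] that j0(2) by blast
  have fox2: "fox ?X g (ct_value D t2) \<noteq> 0" if "j0 \<in> ?l2"
    using IH(2)[OF hang(2)] that j0(2) by blast
  have "fox ?X g (fg_comm (ct_value D t1) (ct_value D t2)) \<noteq> 0"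
  proof (cases "j0 \<in> ?l1")
    case True
    then have "j0 \<notin> ?l2"
      using disj by blast
    with True show ?thesis
      using fox_fg_comm_neq_0(1)[OF insertI1 dies hangs2 fox1] by blast
  next
    case False
    then have "j0 \<in> ?l2"
      using j0(1) by blast
    with False show ?thesis
      using fox_fg_comm_neq_0(2)[OF insertI1 dies hangs1 fox2] by blast
  qed
  then show ?case
    unfolding ct_value.simps .
qed

lemma strongly_solves_ct_value:
  assumes "finite V"
    and leaves: "\<And>j. j \<in> set (ct_leaves t) \<Longrightarrow> strongly_solves V (F j) (D j)"
    and one_at_a_time: "\<And>i j P g. i \<in> set (ct_leaves t) \<Longrightarrow> j \<in> set (ct_leaves t) \<Longrightarrow>
      \<not> F i P \<Longrightarrow> F i (insert g P) \<Longrightarrow> \<not> F j P \<Longrightarrow> F j (insert g P) \<Longrightarrow> i = j"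
    and "distinct (ct_leaves t)"
  shows "strongly_solves V (\<lambda>P. \<exists>j\<in>set (ct_leaves t). F j P) (ct_value D t)"
proof -
  have detects: "fox (insert g P) g (ct_value D t) \<noteq> 0"
    if "\<forall>j\<in>set (ct_leaves t). \<not> F j P" "\<exists>j\<in>set (ct_leaves t). F j (insert g P)" for P g
    by (rule fox_ct_value_neq_0[where J = "set (ct_leaves t)" and F = F,
          OF assms(1) _ _ order_refl assms(4) that])
      (fact leaves one_at_a_time)+
  have "fst ` set (D j) \<subseteq> V" if "j \<in> set (ct_leaves t)" for j
    using leaves[OF that] by (simp add: strongly_solves_def)
  then have "fst ` set (ct_value D t) \<subseteq> V"
    using fst_set_ct_value[of D t] by blast
  moreover have "kill P (ct_value D t) = [] \<longleftrightarrow> (\<exists>j\<in>set (ct_leaves t). F j P)" for P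
  proof
    assume "kill P (ct_value D t) = []"
    then show "\<exists>j\<in>set (ct_leaves t). F j P"
      using kill_ct_value_neq_Nil[OF \<open>finite V\<close> _ _ detects] leaves by blast
  next
    assume "\<exists>j\<in>set (ct_leaves t). F j P"
    then obtain j where j: "j \<in> set (ct_leaves t)" "F j P"
      by blast
    then have "kill P (D j) = []"
      using leaves by (simp add: strongly_solves_def)
    with j(1) show "kill P (ct_value D t) = []"
      by (rule kill_ct_value_eq_Nil)
  qed
  ultimately show ?thesis
    unfolding strongly_solves_def using detects by blast
qed

section \<open>The construction\<close>

lemma kill_insert_notin: "g \<notin> fst ` set w \<Longrightarrow> kill (insert g P) w = kill P w"
  by (induction w) (auto simp: kill_def restrict_word_Cons)

lemma kill_Un_disjoint: "fst ` set w \<inter> R = {} \<Longrightarrow> kill (P \<union> R) w = kill P w"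
  by (induction w) (auto simp: kill_def restrict_word_Cons)

lemma kill_append_eq_Nil_iff:
  assumes "fst ` set u \<subseteq> L" "fst ` set v \<subseteq> R" "L \<inter> R = {}"
  shows "kill P (u @ v) = [] \<longleftrightarrow> kill P u = [] \<and> kill P v = []"
proof
  assume "kill P (u @ v) = []"
  then have "kill (P \<union> R) (u @ v) = []" "kill (P \<union> L) (u @ v) = []"
    using kill_eq_Nil_mono by blast+
  moreover have "restrict_word (P \<union> R) v = []" "restrict_word (P \<union> L) u = []"
    using assms(1,2) by (simp_all add: restrict_word_eq_Nil le_supI2)
  moreover have "kill (P \<union> R) u = kill P u" "kill (P \<union> L) v = kill P v"
    using assms by (intro kill_Un_disjoint; blast)+
  ultimately show "kill P u = [] \<and> kill P v = []"
    by (simp_all add: kill_def)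
next
  assume "kill P u = [] \<and> kill P v = []"
  then show "kill P (u @ v) = []"
    by (simp add: kill_append)
qed

lemma strongly_solves_append:
  assumes u: "strongly_solves L F u" and v: "strongly_solves R G v" and "L \<inter> R = {}"
  shows "strongly_solves (L \<union> R) (\<lambda>P. F P \<and> G P) (u @ v)"
proof -
  have letters: "fst ` set u \<subseteq> L" "fst ` set v \<subseteq> R"
    using u v by (simp_all add: strongly_solves_def)
  have kill_iff: "kill P (u @ v) = [] \<longleftrightarrow> F P \<and> G P" for P
    using kill_append_eq_Nil_iff[OF letters \<open>L \<inter> R = {}\<close>] u v by (simp add: strongly_solves_def)
  have F_iff: "F P \<longleftrightarrow> kill P u = []" and G_iff: "G P \<longleftrightarrow> kill P v = []" for P
    using u v by (simp_all add: strongly_solves_def)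
  have "fox (insert g P) g (u @ v) \<noteq> 0"
    if "\<not> (F P \<and> G P)" "F (insert g P) \<and> G (insert g P)" for P g
  proof (cases "g \<in> L")
    case True
    then have "g \<notin> fst ` set v"
      using letters(2) \<open>L \<inter> R = {}\<close> by blast
    then have "G P" "fox (insert g P) g v = 0"
      using that(2) by (simp_all add: G_iff kill_insert_notin fox_eq_0_if_notin)
    then show ?thesis
      using that u by (auto simp: strongly_solves_def fox_append)
  next
    case False
    then have "g \<notin> fst ` set u"
      using letters(1) by blast
    then have "F P" "fox (insert g P) g u = 0" "kill (insert g P) u = []"
      using that(2) by (simp_all add: F_iff kill_insert_notin fox_eq_0_if_notin)
    then show ?thesis
      using that v by (auto simp: strongly_solves_def fox_append_kill_Nil)
  qed
  then show ?thesis
    using letters kill_iff by (auto simp: strongly_solves_def)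
qed

lemma strongly_solves_mono: "strongly_solves V F w \<Longrightarrow> V \<subseteq> V' \<Longrightarrow> strongly_solves V' F w"
  by (auto simp: strongly_solves_def)

lemma strongly_solves_base: "strongly_solves {v} (\<lambda>P. 1 \<le> card (P \<inter> {v})) [(v, True)]"
proof -
  have card: "1 \<le> card (P \<inter> {v}) \<longleftrightarrow> v \<in> P" for P
    by (cases "v \<in> P") auto
  have kill: "kill P [(v, True)] = (if v \<in> P then [] else [(v, True)])" for P
    by (simp add: kill_def restrict_word_def)
  have "fox (insert v P) v [(v, True)] [] = 1" for P
    by (simp add: fox_letter_def)
  then have "fox (insert v P) v [(v, True)] \<noteq> 0" for P
    by (metis zero_fun_apply zero_neq_one)
  then show ?thesis
    unfolding strongly_solves_def card by (auto simp: kill)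
qed

lemma strongly_solves_leaf:
  assumes "L \<inter> R = {}" "j \<le> k"
    and "j = 0 \<and> strongly_solves R (\<lambda>P. k \<le> card (P \<inter> R)) w
      \<or> (\<exists>a b. strongly_solves L (\<lambda>P. j \<le> card (P \<inter> L)) a \<and>
          strongly_solves R (\<lambda>P. k - j \<le> card (P \<inter> R)) b \<and> w = a @ b)
      \<or> j = k \<and> strongly_solves L (\<lambda>P. k \<le> card (P \<inter> L)) w"
  shows "strongly_solves (L \<union> R) (\<lambda>P. j \<le> card (P \<inter> L) \<and> k - j \<le> card (P \<inter> R)) w"
  using assms(3)
proof (elim disjE conjE exE)
  assume "j = 0" "strongly_solves R (\<lambda>P. k \<le> card (P \<inter> R)) w"
  then show ?thesis
    by (auto elim: strongly_solves_mono)
next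
  assume "j = k" "strongly_solves L (\<lambda>P. k \<le> card (P \<inter> L)) w"
  then show ?thesis
    by (auto elim: strongly_solves_mono)
qed (use strongly_solves_append[OF _ _ assms(1)] in auto)

lemma exists_split_iff:
  fixes a b k nL nR :: nat
  assumes "a \<le> nL" "b \<le> nR"
  shows "(\<exists>j\<in>{k - nR..min k nL}. j \<le> a \<and> k - j \<le> b) \<longleftrightarrow> k \<le> a + b"
proof
  assume "k \<le> a + b"
  then have "min a k \<in> {k - nR..min k nL} \<and> min a k \<le> a \<and> k - min a k \<le> b"
    using assms by auto
  then show "\<exists>j\<in>{k - nR..min k nL}. j \<le> a \<and> k - j \<le> b"
    by blast
qed auto

lemma split_crossing_unique:
  fixes a b a' b' i j k :: nat
  assumes "a \<le> a'" "b \<le> b'" "a' + b' \<le> Suc (a + b)" "i \<le> k" "j \<le> k"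
    and "\<not> (i \<le> a \<and> k - i \<le> b)" "i \<le> a' \<and> k - i \<le> b'"
    and "\<not> (j \<le> a \<and> k - j \<le> b)" "j \<le> a' \<and> k - j \<le> b'"
  shows "i = j"
  using assms by arith

lemma card_insert_Int_bounds:
  assumes "finite L" "finite R" "L \<inter> R = {}"
  shows "card (P \<inter> L) \<le> card (insert g P \<inter> L)" "card (P \<inter> R) \<le> card (insert g P \<inter> R)"
    and "card (insert g P \<inter> L) + card (insert g P \<inter> R) \<le> Suc (card (P \<inter> L) + card (P \<inter> R))"
  using assms by (auto simp: Int_insert_left card_insert_if)

lemma strongly_solves_split_ct_value:
  assumes "finite L" "finite R" "L \<inter> R = {}"
    and leaves_eq: "set (ct_leaves t) = {k - card R..min k (card L)}" and "distinct (ct_leaves t)"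
    and leaves: "\<And>j. j \<in> set (ct_leaves t) \<Longrightarrow>
      strongly_solves (L \<union> R) (\<lambda>P. j \<le> card (P \<inter> L) \<and> k - j \<le> card (P \<inter> R)) (D j)"
  shows "strongly_solves (L \<union> R) (\<lambda>P. k \<le> card (P \<inter> (L \<union> R))) (ct_value D t)"
proof -
  define F where "F j P \<longleftrightarrow> j \<le> card (P \<inter> L) \<and> k - j \<le> card (P \<inter> R)" for j P
  have "i = j"
    if "i \<in> set (ct_leaves t)" "j \<in> set (ct_leaves t)" "\<not> F i P" "F i (insert g P)"
      "\<not> F j P" "F j (insert g P)" for i j P g
  proof -
    have "i \<le> k" "j \<le> k"
      using that(1,2) leaves_eq by auto
    then show ?thesis
      using that(3-6) unfolding F_def
      by (rule split_crossing_unique[OF card_insert_Int_bounds[OF assms(1-3)]])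
  qed
  then have "strongly_solves (L \<union> R) (\<lambda>P. \<exists>j\<in>set (ct_leaves t). F j P) (ct_value D t)"
    using assms(1,2,5) leaves unfolding F_def by (intro strongly_solves_ct_value) auto
  moreover have "(\<exists>j\<in>set (ct_leaves t). F j P) \<longleftrightarrow> k \<le> card (P \<inter> (L \<union> R))" for P
  proof -
    have "card (P \<inter> (L \<union> R)) = card (P \<inter> L) + card (P \<inter> R)"
      using assms(1-3) by (simp add: Int_Un_distrib card_Un_disjoint disjoint_iff)
    moreover have "card (P \<inter> L) \<le> card L" "card (P \<inter> R) \<le> card R"
      using assms(1,2) by (simp_all add: card_mono)
    ultimately show ?thesis
      unfolding F_def leaves_eq by (simp add: exists_split_iff)
  qed
  ultimately show ?thesis
    by simp
qed

lemma hword_strongly_solves: "hword V k h \<Longrightarrow> strongly_solves V (\<lambda>P. k \<le> card (P \<inter> V)) h"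
proof (induction rule: hword.induct)
  case (base v)
  show ?case
    by (rule strongly_solves_base)
next
  case (split L R k D t)
  have leaves_eq: "set (ct_leaves t) = {k - card R..min k (card L)}"
    using mset_eq_setD[OF split.hyps(8)]
    by (simp only: set_upt atLeastLessThanSuc_atLeastAtMost flip: Suc_eq_plus1)
  have "distinct (ct_leaves t)"
    using mset_eq_imp_distinct_iff[OF split.hyps(8)] by simp
  moreover have "strongly_solves (L \<union> R) (\<lambda>P. j \<le> card (P \<inter> L) \<and> k - j \<le> card (P \<inter> R)) (D j)"
    if "j \<in> set (ct_leaves t)" for j
  proof (rule strongly_solves_leaf[OF split.hyps(5)])
    have "k - card R \<le> j \<and> j \<le> min k (card L)"
      using that leaves_eq by auto
    then show "j \<le> k"
      and "j = 0 \<and> strongly_solves R (\<lambda>P. k \<le> card (P \<inter> R)) (D j)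
        \<or> (\<exists>a b. strongly_solves L (\<lambda>P. j \<le> card (P \<inter> L)) a \<and>
            strongly_solves R (\<lambda>P. k - j \<le> card (P \<inter> R)) b \<and> D j = a @ b)
        \<or> j = k \<and> strongly_solves L (\<lambda>P. k \<le> card (P \<inter> L)) (D j)"
      using split.IH by auto
  qed
  ultimately show ?case
    by (rule strongly_solves_split_ct_value[OF split.hyps(1,2,5) leaves_eq])
qed

theorem theorem2:
  fixes V :: "'a set" and k :: nat and h :: "'a fword"
  assumes "finite V" and "V \<noteq> {}" and "1 \<le> k" and "k \<le> card V"
    and "hword V k h"
  shows "\<forall>S \<subseteq> V. fg_is_zero (restrict_word S h) \<longleftrightarrow> k \<le> card S"
proof (intro allI impI)
  \<comment> \<open>The other hypotheses are consequences of \<open>hword V k h\<close>.\<close>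
  fix S
  assume "S \<subseteq> V"
  have "strongly_solves V (\<lambda>P. k \<le> card (P \<inter> V)) h"
    using assms(5) by (rule hword_strongly_solves)
  then have "kill S h = [] \<longleftrightarrow> k \<le> card (S \<inter> V)"
    by (simp add: strongly_solves_def)
  then show "fg_is_zero (restrict_word S h) \<longleftrightarrow> k \<le> card S"
    using \<open>S \<subseteq> V\<close> by (simp add: fg_is_zero_iff_reduce kill_def Int_absorb2)
qed

end
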